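(* Let $A$ be a self-adjoint operator in a separable Hilbert space $\mathfrak H$, let $U=(A+iI)(A-iI)^{-1}$ be its Cayley transform, and let $\mathcal L\neq\{0\}$ be a closed subspace of $\mathfrak H$. Let $$S_{\mathcal L}=A\upharpoonright_{\mathcal D(S_{\mathcal L})},\qquad \mathcal D(S_{\mathcal L})=\{u\in\mathcal D(A):((A-iI)u,\gamma)=0\ \ \forall\gamma\in\mathcal L\}.$$ Then the following are equivalent: (i) $S_{\mathcal L}$ is a Phillips symmetric operator (in particular, densely defined); (ii) $\mathcal L$ is a wandering subspace of $U$, i.e. $U^n\mathcal L\perp\mathcal L$ for all $n\in\mathbb N$.
   Context: A closed densely defined symmetric operator $S$ with equal nonzero defect numbers is a Phillips symmetric operator (PSO) if its characteristic function is constant on $\mathbb C_+$; here, given a boundary triplet $(\mathcal H,\Gamma_-,\Gamma_+)$ of $S^*$ (i.e. $\Gamma_\pm:\mathcal D(S^* )\to\mathcal H$ linear, $(S^*f,g)-(f,S^*g)=i[(\Gamma_+f,\Gamma_+g)-(\Gamma_-f,\Gamma_-g)]$, $(\Gamma_-,\Gamma_+)$ surjective onto $\mathcal H\oplus\mathcal H$), the characteristic function $\Theta(\lambda)$, $\lambda\in\mathbb C_+$, is the bounded operator in $\mathcal H$ with $\mathcal D(S)\dotplus\ker(S^*-\lambda I)=\{f\in\mathcal D(S^* ):\Theta(\lambda)\Gamma_+f=\Gamma_-f\}$. Equivalently (and usable as the definition here), $S$ is a PSO iff $\ker(S^*-\lambda I)\perp\ker(S^*-\nu I)$ for all $\lambda\in\mathbb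 C_+,\nu\in\mathbb C_-$. *)

theory Defs
  imports "HOL-Analysis.Analysis" "HOL-Library.Equipollence"
begin

text \<open>A complex inner product space, presented as a real inner product space
  (which supplies norm, metric and topology, so that closure, closedness and
  completeness are the library notions) together with a complex scalar
  multiplication and a complex inner product, linear in the first argument and
  conjugate-linear in the second, whose real part is the real inner product.\<close>

class complex_inner_space = real_inner +
  fixes scaleC :: "complex \<Rightarrow> 'a \<Rightarrow> 'a" (infixr \<open>*\<^sub>C\<close> 75)
    and cinner :: "'a \<Rightarrow> 'a \<Rightarrow> complex"
  assumes scaleC_add_right: "a *\<^sub>C (x + y) = a *\<^sub>C x + a *\<^sub>C y"
    and scaleC_add_left: "(a + b) *\<^sub>C x = a *\<^sub>C x + b *\<^sub>C x"
    and scaleC_scaleC: "a *\<^sub>C (b *\<^sub>C x) = (a * b) *\<^sub>C x"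
    and scaleC_one: "1 *\<^sub>C x = x"
    and scaleR_scaleC: "scaleR r x = complex_of_real r *\<^sub>C x"
    and cinner_commute: "cinner y x = cnj (cinner x y)"
    and cinner_add_left: "cinner (x + y) z = cinner x z + cinner y z"
    and cinner_scaleC_left: "cinner (a *\<^sub>C x) y = a * cinner x y"
    and inner_Re_cinner: "inner x y = Re (cinner x y)"

definition separable_type :: "'a::topological_space itself \<Rightarrow> bool" where
  "separable_type _ \<longleftrightarrow> (\<exists>D::'a set. countable D \<and> closure D = UNIV)"

definition csubspace :: "'a::complex_inner_space set \<Rightarrow> bool" where
  "csubspace M \<longleftrightarrow> 0 \<in> M \<and> (\<forall>x\<in>M. \<forall>y\<in>M. x + y \<in> M) \<and> (\<forall>c. \<forall>x\<in>M. c *\<^sub>C x \<in> M)"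

definition cspan :: "'a::complex_inner_space set \<Rightarrow> 'a set" where
  "cspan B = \<Inter>{M. csubspace M \<and> B \<subseteq> M}"

definition closed_csubspace :: "'a::complex_inner_space set \<Rightarrow> bool" where
  "closed_csubspace M \<longleftrightarrow> csubspace M \<and> closed M"

definition is_onb :: "'a::complex_inner_space set \<Rightarrow> 'a set \<Rightarrow> bool" where
  "is_onb B N \<longleftrightarrow> B \<subseteq> N \<and> (\<forall>x\<in>B. cinner x x = 1)
     \<and> (\<forall>x\<in>B. \<forall>y\<in>B. x \<noteq> y \<longrightarrow> cinner x y = 0) \<and> closure (cspan B) = N"

text \<open>A (possibly unbounded) linear operator is a pair (D, T): the domain D and a
  function T whose values outside D are irrelevant.\<close>

definition clinear_op :: "'a::complex_inner_space set \<Rightarrow> ('a \<Rightarrow> 'a) \<Rightarrow> bool" where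
  "clinear_op D T \<longleftrightarrow> csubspace D \<and> (\<forall>x\<in>D. \<forall>y\<in>D. T (x + y) = T x + T y)
     \<and> (\<forall>c. \<forall>x\<in>D. T (c *\<^sub>C x) = c *\<^sub>C T x)"

definition densely_defined :: "'a::complex_inner_space set \<Rightarrow> bool" where
  "densely_defined D \<longleftrightarrow> closure D = UNIV"

definition closed_op :: "'a::complex_inner_space set \<Rightarrow> ('a \<Rightarrow> 'a) \<Rightarrow> bool" where
  "closed_op D T \<longleftrightarrow> closed {(u, T u) | u. u \<in> D}"

definition symmetric_op :: "'a::complex_inner_space set \<Rightarrow> ('a \<Rightarrow> 'a) \<Rightarrow> bool" where
  "symmetric_op D T \<longleftrightarrow> clinear_op D T \<and> densely_defined D
     \<and> (\<forall>u\<in>D. \<forall>v\<in>D. cinner (T u) v = cinner u (T v))"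

text \<open>Self-adjoint: densely defined linear operator whose adjoint (as a graph) equals it:
  v \<in> D(T*) with T* v = w iff (T u, v) = (u, w) for all u \<in> D.\<close>
definition selfadjoint_op :: "'a::complex_inner_space set \<Rightarrow> ('a \<Rightarrow> 'a) \<Rightarrow> bool" where
  "selfadjoint_op D T \<longleftrightarrow> clinear_op D T \<and> densely_defined D
     \<and> (\<forall>v w. (\<forall>u\<in>D. cinner (T u) v = cinner u w) \<longleftrightarrow> (v \<in> D \<and> w = T v))"

text \<open>ker(T* - \<lambda> I) = {v \<in> D(T*). T* v = \<lambda> v}.\<close>
definition defect_space :: "'a::complex_inner_space set \<Rightarrow> ('a \<Rightarrow> 'a) \<Rightarrow> complex \<Rightarrow> 'a set" where
  "defect_space D T z = {v. \<forall>u\<in>D. cinner (T u) v = cinner u (z *\<^sub>C v)}"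

text \<open>Phillips symmetric operator: closed densely defined symmetric operator with equal
  nonzero defect numbers (Hilbert dimensions of ker(T* - iI), ker(T* + iI)), such that
  ker(T* - \<lambda> I) is orthogonal to ker(T* - \<nu> I) for all \<lambda> in C+, \<nu> in C-.\<close>
definition phillips_symmetric :: "'a::complex_inner_space set \<Rightarrow> ('a \<Rightarrow> 'a) \<Rightarrow> bool" where
  "phillips_symmetric D T \<longleftrightarrow> symmetric_op D T \<and> closed_op D T
     \<and> defect_space D T \<i> \<noteq> {0}
     \<and> (\<exists>B1 B2. is_onb B1 (defect_space D T \<i>) \<and> is_onb B2 (defect_space D T (- \<i>)) \<and> B1 \<approx> B2)
     \<and> (\<forall>z w. Im z > 0 \<longrightarrow> Im w < 0 \<longrightarrow>
          (\<forall>x\<in>defect_space D T z. \<forall>y\<in>defect_space D T w. cinner x y = 0))"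

text \<open>Cayley transform U = (A + iI)(A - iI)^{-1}.\<close>
definition cayley :: "'a::complex_inner_space set \<Rightarrow> ('a \<Rightarrow> 'a) \<Rightarrow> 'a \<Rightarrow> 'a" where
  "cayley D T f = (let x = (THE x. x \<in> D \<and> T x - \<i> *\<^sub>C x = f) in T x + \<i> *\<^sub>C x)"

definition SL_dom :: "'a::complex_inner_space set \<Rightarrow> ('a \<Rightarrow> 'a) \<Rightarrow> 'a set \<Rightarrow> 'a set" where
  "SL_dom D T L = {u \<in> D. \<forall>\<gamma>\<in>L. cinner (T u - \<i> *\<^sub>C u) \<gamma> = 0}"

definition wandering :: "('a::complex_inner_space \<Rightarrow> 'a) \<Rightarrow> 'a set \<Rightarrow> bool" where
  "wandering U L \<longleftrightarrow> (\<forall>n::nat. n \<ge> 1 \<longrightarrow> (\<forall>x\<in>L. \<forall>y\<in>L. cinner ((U ^^ n) x) y = 0))"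

end

theory Submission
  imports Defs
begin

text \<open>
  Everything is read off through the Cayley transform \<open>U\<close>. For every \<open>z\<close>, a vector \<open>v\<close> lies
  in \<open>ker(S\<^sub>L\<^sup>* - z)\<close> iff \<open>(z - \<i>) v - (z + \<i>) U\<^sup>-\<^sup>1 v \<in> L\<close>; so
  \<open>ker(S\<^sub>L\<^sup>* + \<i>) = L\<close> and \<open>ker(S\<^sub>L\<^sup>* - \<i>) = U L\<close>, and the deficiency indices agree.
  For \<open>z\<close> in the upper and \<open>w\<close> in the lower half-plane the condition becomes
  \<open>v = U x + \<zeta> U v\<close>, \<open>u = y + \<eta> U\<^sup>-\<^sup>1 u\<close> with \<open>x, y \<in> L\<close> and \<open>|\<zeta>|, |\<eta>| < 1\<close>,
  so \<open>\<langle>v, u\<rangle>\<close> expands geometrically in the numbers \<open>\<langle>U\<^sup>n x, y\<rangle>\<close>, \<open>n \<ge> 1\<close>.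
  Wandering kills all of them; conversely, orthogonality for all real \<open>\<eta> \<in> (0, 1)\<close> forces
  them to vanish one after the other. Finally, a vector \<open>h\<close> orthogonal to the domain of \<open>S\<^sub>L\<close>
  satisfies \<open>U\<^sup>-\<^sup>1 h - h \<in> L\<close>; for a wandering \<open>L\<close> this makes
  \<open>\<parallel>U\<^sup>-\<^sup>n h - h\<parallel>\<^sup>2 = n \<parallel>U\<^sup>-\<^sup>1 h - h\<parallel>\<^sup>2\<close> unbounded unless \<open>U h = h\<close>,
  and \<open>1\<close> is not an eigenvalue of a Cayley transform.
\<close>

section \<open>Complex inner product spaces\<close>

lemma scaleC_zero_left [simp]: "0 *\<^sub>C (x::'a::complex_inner_space) = 0"
  using scaleR_scaleC[of 0 x, symmetric] by (simp only: of_real_0 scaleR_zero_left)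

lemma scaleC_minus1_left: "(-1) *\<^sub>C (x::'a::complex_inner_space) = - x"
  using scaleR_scaleC[of "-1" x, symmetric] by (simp only: of_real_minus of_real_1 scaleR_minus1_left)

lemma scaleC_zero_right [simp]: "c *\<^sub>C (0::'a::complex_inner_space) = 0"
  using scaleC_add_right[of c 0 0] by (simp only: add_0_right add_cancel_right_right)

lemma scaleC_minus_left: "(- c) *\<^sub>C (x::'a::complex_inner_space) = - (c *\<^sub>C x)"
  by (metis mult_minus1 scaleC_minus1_left scaleC_scaleC)

lemma scaleC_minus_right: "c *\<^sub>C (- x::'a::complex_inner_space) = - (c *\<^sub>C x)"
  by (metis mult.commute scaleC_minus1_left scaleC_scaleC)

lemma scaleC_diff_right: "c *\<^sub>C (x - y::'a::complex_inner_space) = c *\<^sub>C x - c *\<^sub>C y"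
  by (simp only: diff_conv_add_uminus scaleC_add_right scaleC_minus_right)

lemma scaleC_left_commute: "a *\<^sub>C b *\<^sub>C (x::'a::complex_inner_space) = b *\<^sub>C a *\<^sub>C x"
  by (simp only: scaleC_scaleC mult.commute)

lemma scaleC_cancel:
  assumes "c \<noteq> 0" and "c *\<^sub>C x = c *\<^sub>C (y::'a::complex_inner_space)"
  shows "x = y"
  by (metis assms left_inverse scaleC_one scaleC_scaleC)

lemma cinner_add_right: "cinner (x::'a::complex_inner_space) (y + z) = cinner x y + cinner x z"
  by (metis cinner_add_left cinner_commute complex_cnj_add)

lemma cinner_scaleC_right: "cinner (x::'a::complex_inner_space) (c *\<^sub>C y) = cnj c * cinner x y"
  by (metis cinner_commute cinner_scaleC_left complex_cnj_mult)

lemma cinner_zero_left [simp]: "cinner 0 (x::'a::complex_inner_space) = 0"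
  using cinner_add_left[of 0 0 x] by simp

lemma cinner_zero_right [simp]: "cinner (x::'a::complex_inner_space) 0 = 0"
  using cinner_add_right[of x 0 0] by simp

lemma cinner_minus_left: "cinner (- x) (y::'a::complex_inner_space) = - cinner x y"
  using cinner_scaleC_left[of "-1" x y] by (simp add: scaleC_minus1_left)

lemma cinner_minus_right: "cinner (x::'a::complex_inner_space) (- y) = - cinner x y"
  using cinner_scaleC_right[of x "-1" y] by (simp add: scaleC_minus1_left)

lemma cinner_diff_left: "cinner (x - y) (z::'a::complex_inner_space) = cinner x z - cinner y z"
  by (simp only: diff_conv_add_uminus cinner_add_left cinner_minus_left)

lemma cinner_diff_right: "cinner (x::'a::complex_inner_space) (y - z) = cinner x y - cinner x z"
  by (simp only: diff_conv_add_uminus cinner_add_right cinner_minus_right)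

lemmas cinner_simps = cinner_add_left cinner_add_right cinner_diff_left cinner_diff_right
  cinner_scaleC_left cinner_scaleC_right cinner_minus_left cinner_minus_right

lemma cinner_self_eq_power2_norm: "cinner (x::'a::complex_inner_space) x = complex_of_real ((norm x)^2)"
proof -
  have "Im (cinner x x) = 0"
    using arg_cong[OF cinner_commute[of x x], of Im] by simp
  moreover have "Re (cinner x x) = (norm x)^2"
    by (simp add: power2_norm_eq_inner inner_Re_cinner)
  ultimately show ?thesis by (simp add: complex_eq_iff)
qed

lemma power2_norm_eq_cinner: "(norm (x::'a::complex_inner_space))^2 = Re (cinner x x)"
  by (simp add: cinner_self_eq_power2_norm)

lemma cinner_self_eq_0 [simp]: "cinner (x::'a::complex_inner_space) x = 0 \<longleftrightarrow> x = 0"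
  by (simp add: cinner_self_eq_power2_norm)

lemma cinner_eq_0_iff_inner:
  "cinner x (y::'a::complex_inner_space) = 0 \<longleftrightarrow> inner x y = 0 \<and> inner x (\<i> *\<^sub>C y) = 0"
  by (simp add: inner_Re_cinner cinner_scaleC_right complex_eq_iff)

lemma norm_scaleC: "norm (c *\<^sub>C (x::'a::complex_inner_space)) = cmod c * norm x"
proof -
  have "cinner (c *\<^sub>C x) (c *\<^sub>C x) = (c * cnj c) * cinner x x"
    by (simp add: cinner_simps mult.assoc)
  then have "(norm (c *\<^sub>C x))^2 = Re (c * cnj c * cinner x x)"
    by (simp add: power2_norm_eq_cinner)
  also have "\<dots> = (cmod c * norm x)^2"
    by (simp add: cinner_self_eq_power2_norm complex_mult_cnj cmod_power2 power_mult_distrib)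
  finally show ?thesis by (simp add: power2_eq_iff_nonneg)
qed

lemma norm_add_power2_orthogonal:
  assumes "cinner a (b::'a::complex_inner_space) = 0"
  shows "(norm (a + b))^2 = (norm a)^2 + (norm b)^2"
proof -
  have "inner a b = 0" using assms by (simp add: inner_Re_cinner)
  then show ?thesis
    by (simp add: power2_norm_eq_inner inner_add_left inner_add_right inner_commute[of b a])
qed

lemma cinner_cauchy_schwarz: "cmod (cinner (x::'a::complex_inner_space) y) \<le> norm x * norm y"
proof (cases "cinner x y = 0")
  case False
  define t where "t = cnj (cinner x y) / complex_of_real (cmod (cinner x y))"
  have "cmod (cinner x y) = inner (t *\<^sub>C x) y"
    using False by (simp add: t_def inner_Re_cinner cinner_scaleC_left complex_norm_square[symmetric]
        power2_eq_square field_simps complex_mult_cnj)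
  also have "\<dots> \<le> norm (t *\<^sub>C x) * norm y" by (rule norm_cauchy_schwarz)
  also have "\<dots> = norm x * norm y"
    using False by (simp add: norm_scaleC t_def norm_divide)
  finally show ?thesis .
qed simp

lemma bounded_linear_scaleC_right: "bounded_linear (\<lambda>x::'a::complex_inner_space. c *\<^sub>C x)"
  by (rule bounded_linear_intro[where K="cmod c"])
    (simp_all add: scaleC_add_right scaleR_scaleC scaleC_left_commute norm_scaleC)

lemma bounded_linear_cinner_left: "bounded_linear (\<lambda>x::'a::complex_inner_space. cinner x y)"
  by (rule bounded_linear_intro[where K="norm y"])
    (simp_all add: cinner_add_left scaleR_scaleC cinner_scaleC_left scaleR_conv_of_real cinner_cauchy_schwarz)

lemma tendsto_cinner_left: "X \<longlonglongrightarrow> x \<Longrightarrow> (\<lambda>n. cinner (X n) (y::'a::complex_inner_space)) \<longlonglongrightarrow> cinner x y"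
  by (rule bounded_linear.tendsto[OF bounded_linear_cinner_left])

lemma tendsto_cinner_right: "X \<longlonglongrightarrow> x \<Longrightarrow> (\<lambda>n. cinner (y::'a::complex_inner_space) (X n)) \<longlonglongrightarrow> cinner y x"
  by (subst (1 2) cinner_commute) (intro tendsto_cnj tendsto_cinner_left)

lemma tendsto_scaleC: "X \<longlonglongrightarrow> x \<Longrightarrow> (\<lambda>n. c *\<^sub>C (X n::'a::complex_inner_space)) \<longlonglongrightarrow> c *\<^sub>C x"
  by (rule bounded_linear.tendsto[OF bounded_linear_scaleC_right])

section \<open>Orthogonal projections and orthonormal bases\<close>

lemma csubspace_imp_subspace: "csubspace M \<Longrightarrow> subspace M"
  by (simp add: csubspace_def subspace_def scaleR_scaleC)

lemma closed_csubspace_closure: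
  assumes "csubspace M"
  shows "closed_csubspace (closure M)"
proof -
  have "closure M \<subseteq> (\<lambda>x. x + y) -` closure M" if "y \<in> closure M" for y
  proof -
    have "M \<subseteq> (\<lambda>x. x + y) -` closure M"
    proof
      fix x assume "x \<in> M"
      have "M \<subseteq> (\<lambda>y. x + y) -` closure M"
        using \<open>x \<in> M\<close> assms closure_subset[of M] unfolding csubspace_def by blast
      then have "closure M \<subseteq> (\<lambda>y. x + y) -` closure M"
        by (intro closure_minimal continuous_closed_vimage) (auto intro: continuous_intros)
      then show "x \<in> (\<lambda>x. x + y) -` closure M" using that by auto
    qed
    then show ?thesis
      by (intro closure_minimal continuous_closed_vimage) (auto intro: continuous_intros)
  qed
  moreover have "closure M \<subseteq> (\<lambda>x. c *\<^sub>C x) -` closure M" for c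
  proof -
    have "M \<subseteq> (\<lambda>x. c *\<^sub>C x) -` closure M"
      using assms closure_subset[of M] unfolding csubspace_def by blast
    then show ?thesis
      by (intro closure_minimal continuous_closed_vimage linear_continuous_at bounded_linear_scaleC_right)
        simp_all
  qed
  moreover have "0 \<in> closure M"
    using assms closure_subset[of M] unfolding csubspace_def by blast
  ultimately show ?thesis
    by (auto simp: closed_csubspace_def csubspace_def)
qed

lemma parallelogram_midpoint:
  fixes x a b :: "'a::real_inner"
  shows "(norm (a - b))^2
    = 2 * (norm (x - a))^2 + 2 * (norm (x - b))^2 - 4 * (norm (x - ((1/2) *\<^sub>R a + (1/2) *\<^sub>R b)))^2"
  by (simp add: power2_norm_eq_inner inner_simps inner_commute algebra_simps)

lemma nearest_point_exists:
  fixes M :: "'a::{real_inner, complete_space} set"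
  assumes "closed M" and "convex M" and "M \<noteq> {}"
  obtains p where "p \<in> M" and "\<And>y. y \<in> M \<Longrightarrow> norm (x - p) \<le> norm (x - y)"
proof -
  define d where "d = (INF y\<in>M. (norm (x - y))^2)"
  have d_le: "d \<le> (norm (x - y))^2" if "y \<in> M" for y
    unfolding d_def using that by (intro cINF_lower) (auto intro: bdd_belowI[of _ 0])
  have "\<exists>y\<in>M. (norm (x - y))^2 < d + inverse (real (Suc n))" for n
    using cInf_lessD[of "(\<lambda>y. (norm (x - y))^2) ` M" "d + inverse (real (Suc n))"] assms(3)
    by (auto simp: d_def)
  then obtain m where m: "\<And>n. m n \<in> M" and m_d: "\<And>n. (norm (x - m n))^2 < d + inverse (real (Suc n))"
    by metis
  \<comment> \<open>A minimizing sequence is Cauchy by the parallelogram law, because midpoints stay in \<open>M\<close>.\<close>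
  have m_close: "(norm (m i - m j))^2 \<le> 2 * inverse (real (Suc i)) + 2 * inverse (real (Suc j))" for i j
    using parallelogram_midpoint[of "m i" "m j" x] m_d[of i] m_d[of j]
      d_le[OF convexD[OF assms(2) m[of i] m[of j], of "1/2" "1/2"]] by simp
  have "Cauchy m"
  proof (rule CauchyI)
    fix e :: real assume "0 < e"
    obtain N where N: "inverse (real (Suc N)) < e^2 / 4"
      using reals_Archimedean[of "e^2/4"] \<open>0 < e\<close> by auto
    have "norm (m i - m j) < e" if "N \<le> i" "N \<le> j" for i j
    proof -
      have "inverse (real (Suc i)) \<le> inverse (real (Suc N))" "inverse (real (Suc j)) \<le> inverse (real (Suc N))"
        using that by (simp_all add: le_imp_inverse_le)
      then have "(norm (m i - m j))^2 < e^2" using m_close[of i j] N by linarith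
      then show ?thesis using \<open>0 < e\<close> by (simp add: power_less_imp_less_base)
    qed
    then show "\<exists>M. \<forall>i\<ge>M. \<forall>j\<ge>M. norm (m i - m j) < e" by blast
  qed
  then obtain p where "m \<longlonglongrightarrow> p" using Cauchy_convergent_iff convergent_def by blast
  then have "p \<in> M" using assms(1) m closed_sequential_limits by blast
  have "(\<lambda>n. (norm (x - m n))^2) \<longlonglongrightarrow> (norm (x - p))^2"
    by (intro tendsto_intros \<open>m \<longlonglongrightarrow> p\<close>)
  moreover have "(\<lambda>n. d + inverse (real (Suc n))) \<longlonglongrightarrow> d"
    using tendsto_add[OF tendsto_const LIMSEQ_inverse_real_of_nat] by simp
  ultimately have "(norm (x - p))^2 \<le> d"
    by (rule LIMSEQ_le) (use m_d less_imp_le in auto)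
  then show ?thesis
    using that[OF \<open>p \<in> M\<close>] d_le by (meson norm_ge_zero power2_le_imp_le order_trans)
qed

lemma orthogonal_if_nearest_point:
  fixes M :: "'a::real_inner set"
  assumes "subspace M" and "p \<in> M" and nearest: "\<And>y. y \<in> M \<Longrightarrow> norm (x - p) \<le> norm (x - y)"
    and "y \<in> M"
  shows "inner (x - p) y = 0"
proof (cases "y = 0")
  case False
  define a where "a = inner (x - p) y"
  define b where "b = (norm y)^2"
  have "0 < b" using False by (simp add: b_def)
  have "p + (a / b) *\<^sub>R y \<in> M"
    using assms(1,2,4) by (simp add: subspace_add subspace_scale)
  then have "(norm (x - p))^2 \<le> (norm ((x - p) - (a / b) *\<^sub>R y))^2"
    using nearest by (simp add: diff_diff_eq power_mono)
  also have "\<dots> = (norm (x - p))^2 - a^2 / b"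
    using \<open>0 < b\<close> unfolding b_def power2_norm_eq_inner
    by (simp add: inner_simps inner_commute a_def power2_eq_square field_simps)
  finally have "a^2 / b \<le> 0" by simp
  with \<open>0 < b\<close> show ?thesis by (simp add: a_def divide_le_0_iff)
qed simp

lemma exists_orthogonal_projection:
  fixes M :: "'a::{complex_inner_space, complete_space} set"
  assumes "closed_csubspace M"
  obtains p where "p \<in> M" and "\<And>y. y \<in> M \<Longrightarrow> cinner (x - p) y = 0"
proof -
  have sub: "subspace M" and "closed M"
    using assms csubspace_imp_subspace by (auto simp: closed_csubspace_def)
  then obtain p where "p \<in> M" and nearest: "\<And>y. y \<in> M \<Longrightarrow> norm (x - p) \<le> norm (x - y)"
    using nearest_point_exists subspace_imp_convex subspace_0 by blast
  have "\<i> *\<^sub>C y \<in> M" if "y \<in> M" for y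
    using assms that by (simp add: closed_csubspace_def csubspace_def)
  then show ?thesis
    using that[OF \<open>p \<in> M\<close>] orthogonal_if_nearest_point[OF sub \<open>p \<in> M\<close> nearest]
    by (simp add: cinner_eq_0_iff_inner)
qed

lemma closed_csubspace_orthogonal_orthogonal:
  fixes L :: "'a::{complex_inner_space, complete_space} set"
  assumes "closed_csubspace L" and "\<And>f. (\<forall>g\<in>L. cinner f g = 0) \<Longrightarrow> cinner f x = 0"
  shows "x \<in> L"
proof -
  obtain p where "p \<in> L" and perp: "\<And>y. y \<in> L \<Longrightarrow> cinner (x - p) y = 0"
    using exists_orthogonal_projection[OF assms(1)] by blast
  have "cinner (x - p) (x - p) = 0"
    using assms(2)[of "x - p"] perp \<open>p \<in> L\<close> by (simp add: cinner_diff_right)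
  then show ?thesis using \<open>p \<in> L\<close> by simp
qed

lemma csubspace_cspan: "csubspace (cspan B)"
  unfolding cspan_def csubspace_def by auto

lemma cspan_superset: "B \<subseteq> cspan B"
  unfolding cspan_def by auto

lemma closure_cspan_subset:
  assumes "closed_csubspace M" and "B \<subseteq> M"
  shows "closure (cspan B) \<subseteq> M"
proof -
  have "cspan B \<subseteq> M" using assms unfolding cspan_def closed_csubspace_def by auto
  then show ?thesis using assms(1) closure_minimal unfolding closed_csubspace_def by blast
qed

lemma closed_csubspace_vimage:
  fixes f :: "'a::complex_inner_space \<Rightarrow> 'b::complex_inner_space"
  assumes "closed_csubspace M" and "bounded_linear f" and "\<And>c x. f (c *\<^sub>C x) = c *\<^sub>C f x"
  shows "closed_csubspace (f -` M)"
proof -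
  have "f (x + y) = f x + f y" for x y using assms(2) by (simp add: bounded_linear_def linear_add)
  moreover have "f 0 = 0" using assms(3)[of 0 0] by simp
  ultimately have "csubspace (f -` M)"
    using assms(1,3) unfolding closed_csubspace_def csubspace_def by simp
  moreover have "closed (f -` M)"
    using assms(1,2) by (intro continuous_closed_vimage linear_continuous_at) (simp_all add: closed_csubspace_def)
  ultimately show ?thesis by (simp add: closed_csubspace_def)
qed

definition orthonormal :: "'a::complex_inner_space set \<Rightarrow> bool" where
  "orthonormal B \<longleftrightarrow> (\<forall>x\<in>B. cinner x x = 1) \<and> (\<forall>x\<in>B. \<forall>y\<in>B. x \<noteq> y \<longrightarrow> cinner x y = 0)"

lemma orthonormal_Union_chain:
  assumes "C \<in> chains {B. B \<subseteq> M \<and> orthonormal B}"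
  shows "\<Union>C \<subseteq> M \<and> orthonormal (\<Union>C)"
proof -
  have CF: "\<And>B. B \<in> C \<Longrightarrow> B \<subseteq> M \<and> orthonormal B"
    and chain: "\<And>A B. A \<in> C \<Longrightarrow> B \<in> C \<Longrightarrow> A \<subseteq> B \<or> B \<subseteq> A"
    using assms by (auto simp: chains_def chain_subset_def)
  have "cinner x y = 0" if xy: "x \<in> \<Union>C" "y \<in> \<Union>C" "x \<noteq> y" for x y
  proof -
    obtain A B where "A \<in> C" "B \<in> C" "x \<in> A" "y \<in> B" using xy by blast
    then obtain E where "E \<in> C" "x \<in> E" "y \<in> E" using chain by blast
    then show ?thesis using CF \<open>x \<noteq> y\<close> by (auto simp: orthonormal_def)
  qed
  moreover have "cinner x x = 1" if "x \<in> \<Union>C" for x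
    using that CF by (auto simp: orthonormal_def)
  moreover have "\<Union>C \<subseteq> M" using CF by blast
  ultimately show ?thesis by (simp add: orthonormal_def)
qed

lemma exists_unit_orthogonal:
  fixes M N :: "'a::{complex_inner_space, complete_space} set"
  assumes "csubspace M" and "closed_csubspace N" and "N \<subseteq> M" and "x \<in> M" and "x \<notin> N"
  obtains e where "e \<in> M" and "cinner e e = 1" and "\<And>y. y \<in> N \<Longrightarrow> cinner e y = 0"
proof -
  obtain p where "p \<in> N" and perp: "\<And>y. y \<in> N \<Longrightarrow> cinner (x - p) y = 0"
    using exists_orthogonal_projection[OF assms(2)] by blast
  have "x - p \<noteq> 0" using \<open>p \<in> N\<close> assms(5) by auto
  have "x + (-1) *\<^sub>C p \<in> M"
    using assms(1,3,4) \<open>p \<in> N\<close> unfolding csubspace_def by blast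
  then have "x - p \<in> M" by (simp add: scaleC_minus1_left)
  define e where "e = complex_of_real (1 / norm (x - p)) *\<^sub>C (x - p)"
  show ?thesis
  proof (rule that)
    show "e \<in> M" using \<open>x - p \<in> M\<close> assms(1) by (simp add: e_def csubspace_def)
    show "cinner e e = 1"
      using \<open>x - p \<noteq> 0\<close> by (simp add: e_def cinner_self_eq_power2_norm norm_scaleC norm_divide)
    show "cinner e y = 0" if "y \<in> N" for y
      using perp[OF that] by (simp add: e_def cinner_scaleC_left)
  qed
qed

lemma is_onb_exists:
  fixes M :: "'a::{complex_inner_space, complete_space} set"
  assumes "closed_csubspace M"
  obtains B where "is_onb B M"
proof -
  define F where "F = {B. B \<subseteq> M \<and> orthonormal B}"
  have "\<forall>C\<in>chains F. \<Union>C \<in> F"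
    using orthonormal_Union_chain unfolding F_def by blast
  then obtain B where "B \<in> F" and maximal: "\<And>X. X \<in> F \<Longrightarrow> B \<subseteq> X \<Longrightarrow> X = B"
    using Zorn_Lemma[of F] by blast
  then have "B \<subseteq> M" and "orthonormal B" by (auto simp: F_def)
  define N where "N = closure (cspan B)"
  have "N \<subseteq> M" unfolding N_def by (rule closure_cspan_subset[OF assms \<open>B \<subseteq> M\<close>])
  have "B \<subseteq> N" unfolding N_def using cspan_superset closure_subset by blast
  have "M \<subseteq> N"
  proof
    fix x assume "x \<in> M"
    show "x \<in> N"
    proof (rule ccontr)
      assume "x \<notin> N"
      have "csubspace M" using assms by (simp add: closed_csubspace_def)
      moreover have "closed_csubspace N"
        unfolding N_def by (rule closed_csubspace_closure[OF csubspace_cspan])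
      ultimately obtain e where "e \<in> M" "cinner e e = 1" and perp: "\<And>y. y \<in> N \<Longrightarrow> cinner e y = 0"
        using exists_unit_orthogonal \<open>N \<subseteq> M\<close> \<open>x \<in> M\<close> \<open>x \<notin> N\<close> by blast
      have perp': "cinner y e = 0" if "y \<in> B" for y
        using perp \<open>B \<subseteq> N\<close> that cinner_commute[of y e] by auto
      have "e \<notin> B" using perp' \<open>cinner e e = 1\<close> by force
      moreover have "insert e B \<in> F"
        using \<open>orthonormal B\<close> \<open>B \<subseteq> M\<close> \<open>e \<in> M\<close> \<open>cinner e e = 1\<close> perp perp' \<open>B \<subseteq> N\<close>
        by (auto simp: F_def orthonormal_def)
      ultimately show False using maximal[of "insert e B"] by blast
    qed
  qed
  then have "is_onb B M"
    using \<open>N \<subseteq> M\<close> \<open>B \<subseteq> M\<close> \<open>orthonormal B\<close> by (simp add: is_onb_def orthonormal_def N_def)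
  then show ?thesis by (rule that)
qed

section \<open>Scalar estimates\<close>

lemma Cauchy_dominated:
  assumes "Cauchy g" and "0 < K" and "\<And>m n. norm (f m - f n) \<le> K * norm (g m - g n)"
  shows "Cauchy f"
proof (rule CauchyI)
  fix e :: real assume "0 < e"
  then obtain N where "\<forall>m\<ge>N. \<forall>n\<ge>N. norm (g m - g n) < e / K"
    using CauchyD[OF assms(1)] assms(2) by (meson divide_pos_pos)
  then have "\<forall>m\<ge>N. \<forall>n\<ge>N. norm (f m - f n) < e"
    using assms(2,3) by (smt (verit, best) pos_less_divide_eq mult.commute)
  then show "\<exists>N. \<forall>m\<ge>N. \<forall>n\<ge>N. norm (f m - f n) < e" by blast
qed

lemma bounded_geometric_recurrence_eq_0:
  fixes f :: "nat \<Rightarrow> complex"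
  assumes rec: "\<And>m. f m = c * f (Suc m)" and "cmod c < 1" and bounded: "\<And>m. cmod (f m) \<le> K"
  shows "f m = 0"
proof -
  have power: "f m = c ^ k * f (m + k)" for k
    by (induction k) (simp_all add: rec[of "m + _"])
  have le: "cmod (f m) \<le> cmod c ^ k * K" for k
    using power[of k] by (simp add: norm_mult norm_power mult_left_mono[OF bounded])
  have "(\<lambda>k. cmod c ^ k * K) \<longlonglongrightarrow> 0 * K"
    by (intro tendsto_mult tendsto_const LIMSEQ_realpow_zero) (use \<open>cmod c < 1\<close> in simp_all)
  then have "cmod (f m) \<le> 0 * K" by (rule LIMSEQ_le_const) (use le in blast)
  then show ?thesis by simp
qed

lemma nonpos_if_le_vanishing_multiples:
  fixes a K :: real
  assumes "\<And>\<eta>. 0 < \<eta> \<Longrightarrow> \<eta> < 1 \<Longrightarrow> a \<le> \<eta> * (K / (1 - \<eta>))"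
  shows "a \<le> 0"
proof -
  have lim: "((\<lambda>\<eta>. \<eta> * (K / (1 - \<eta>))) \<longlongrightarrow> 0 * (K / (1 - 0))) (at_right 0)"
    by (intro tendsto_intros) simp_all
  have ev: "eventually (\<lambda>\<eta>. a \<le> \<eta> * (K / (1 - \<eta>))) (at_right (0::real))"
    using assms by (auto simp: eventually_at_right_field intro: exI[of _ 1])
  show ?thesis using tendsto_le[OF trivial_limit_at_right_real lim tendsto_const ev] by simp
qed

lemma cmod_cayley_lower: "Im w < 0 \<Longrightarrow> cmod ((w + \<i>) / (w - \<i>)) < 1"
proof -
  assume "Im w < 0"
  then have "(cmod (w + \<i>))^2 < (cmod (w - \<i>))^2"
    by (simp only: cmod_power2) (simp add: power2_eq_square algebra_simps)
  then have "cmod (w + \<i>) < cmod (w - \<i>)" by (rule power_less_imp_less_base) simp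
  then show ?thesis by (simp add: norm_divide divide_less_eq)
qed

lemma cmod_cayley_upper: "Im z > 0 \<Longrightarrow> cmod ((z - \<i>) / (z + \<i>)) < 1"
proof -
  assume "Im z > 0"
  then have "(cmod (z - \<i>))^2 < (cmod (z + \<i>))^2"
    by (simp only: cmod_power2) (simp add: power2_eq_square algebra_simps)
  then have "cmod (z - \<i>) < cmod (z + \<i>)" by (rule power_less_imp_less_base) simp
  then show ?thesis by (simp add: norm_divide divide_less_eq)
qed

lemma exists_lower_half_plane_cayley_parameter:
  fixes \<eta> :: real
  assumes "-1 < \<eta>" and "\<eta> < 1"
  obtains w where "Im w < 0" and "(w + \<i>) / (w - \<i>) = complex_of_real \<eta>"
proof
  define w where "w = - \<i> * complex_of_real ((1 + \<eta>) / (1 - \<eta>))"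
  show "Im w < 0" using assms by (simp add: w_def)
  have "w - \<i> = - \<i> * complex_of_real (2 / (1 - \<eta>))"
    and "w + \<i> = - \<i> * complex_of_real (2 * \<eta> / (1 - \<eta>))"
    using assms by (simp_all add: w_def field_simps complex_eq_iff)
  then show "(w + \<i>) / (w - \<i>) = complex_of_real \<eta>"
    using assms by (simp del: of_real_divide add: of_real_divide[symmetric])
qed

section \<open>Unitary operators and wandering subspaces\<close>

locale unitary_pair =
  fixes U V :: "'a::{complex_inner_space, complete_space} \<Rightarrow> 'a"
  assumes U_V [simp]: "U (V x) = x"
    and V_U [simp]: "V (U x) = x"
    and U_add: "U (x + y) = U x + U y"
    and U_scaleC: "U (c *\<^sub>C x) = c *\<^sub>C U x"
    and cinner_U_U: "cinner (U x) (U y) = cinner x y"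
begin

lemma V_add: "V (x + y) = V x + V y"
  by (metis U_V V_U U_add)

lemma V_scaleC: "V (c *\<^sub>C x) = c *\<^sub>C V x"
  by (metis U_V V_U U_scaleC)

lemma V_0 [simp]: "V 0 = 0"
  using V_scaleC[of 0 0] by simp

lemma V_diff: "V (x - y) = V x - V y"
  by (metis V_add diff_add_cancel add_diff_cancel)

lemma cinner_U_left: "cinner (U x) y = cinner x (V y)"
  using cinner_U_U[of x "V y"] by simp

lemma cinner_funpow_U_left: "cinner ((U ^^ k) x) y = cinner x ((V ^^ k) y)"
proof (induction k arbitrary: x)
  case (Suc k)
  have "cinner ((U ^^ Suc k) x) y = cinner ((U ^^ k) (U x)) y" by (simp only: funpow_Suc_right o_apply)
  then show ?case by (simp add: Suc.IH cinner_U_left)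
qed simp

lemma norm_U [simp]: "norm (U x) = norm x"
proof -
  have "(norm (U x))^2 = (norm x)^2" by (simp add: power2_norm_eq_cinner cinner_U_U)
  then show ?thesis by (simp add: power2_eq_iff_nonneg)
qed

lemma norm_V [simp]: "norm (V x) = norm x"
  using norm_U[of "V x"] by simp

lemma norm_funpow_U [simp]: "norm ((U ^^ k) x) = norm x"
  by (induction k) simp_all

lemma norm_funpow_V [simp]: "norm ((V ^^ k) x) = norm x"
  by (induction k) simp_all

lemma bounded_linear_U: "bounded_linear U"
  by (rule bounded_linear_intro[where K=1]) (simp_all add: U_add scaleR_scaleC U_scaleC)

lemma bounded_linear_V: "bounded_linear V"
  by (rule bounded_linear_intro[where K=1]) (simp_all add: V_add scaleR_scaleC V_scaleC)

lemma is_onb_image: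
  assumes "closed_csubspace M" and "is_onb B M"
  shows "is_onb (U ` B) (U ` M)"
proof -
  define C where "C = closure (cspan (U ` B))"
  have "B \<subseteq> M" and "closure (cspan B) = M" using assms(2) by (simp_all add: is_onb_def)
  have "closed_csubspace (V -` M)"
    by (rule closed_csubspace_vimage[OF assms(1) bounded_linear_V V_scaleC])
  moreover have "U ` B \<subseteq> V -` M" using \<open>B \<subseteq> M\<close> by auto
  ultimately have "C \<subseteq> V -` M" unfolding C_def by (rule closure_cspan_subset)
  have "closed_csubspace (U -` C)"
    unfolding C_def
    by (rule closed_csubspace_vimage[OF closed_csubspace_closure[OF csubspace_cspan] bounded_linear_U U_scaleC])
  moreover have "B \<subseteq> U -` C" unfolding C_def using cspan_superset closure_subset by blast
  ultimately have "M \<subseteq> U -` C"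
    using closure_cspan_subset \<open>closure (cspan B) = M\<close> by blast
  have "C = U ` M"
  proof
    show "C \<subseteq> U ` M" using \<open>C \<subseteq> V -` M\<close> by (auto intro: image_eqI[of _ U "V _"])
    show "U ` M \<subseteq> C" using \<open>M \<subseteq> U -` C\<close> by blast
  qed
  then show ?thesis
    using assms(2) by (auto simp: is_onb_def cinner_U_U C_def)
qed

lemma id_minus_scaleC_V_surj:
  assumes "cmod c < 1"
  obtains u where "u - c *\<^sub>C V u = y"
proof -
  have "dist (y + c *\<^sub>C V u) (y + c *\<^sub>C V w) \<le> cmod c * dist u w" for u w
    by (simp add: dist_norm norm_scaleC flip: V_diff scaleC_diff_right)
  then obtain u where "y + c *\<^sub>C V u = u"
    using banach_fix_type[of "cmod c" "\<lambda>u. y + c *\<^sub>C V u"] assms by auto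
  then show ?thesis by (intro that[of u]) (simp add: algebra_simps)
qed

lemma norm_id_minus_scaleC_V_ge: "(1 - cmod c) * norm u \<le> norm (u - c *\<^sub>C V u)"
  using norm_triangle_ineq2[of u "c *\<^sub>C V u"] by (simp add: norm_scaleC algebra_simps)

lemma wandering_coefficient_bound:
  assumes orth: "\<And>x y u. x \<in> L \<Longrightarrow> y \<in> L \<Longrightarrow> u - complex_of_real \<eta> *\<^sub>C V u = y \<Longrightarrow> cinner (U x) u = 0"
    and "0 < \<eta>" and "\<eta> < 1" and "x \<in> L" and "y \<in> L"
    and earlier: "\<And>k. k < n \<Longrightarrow> cinner ((U ^^ Suc k) x) y = 0"
  shows "cmod (cinner ((U ^^ Suc n) x) y) \<le> \<eta> * (norm x * norm y / (1 - \<eta>))"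
proof -
  define c where "c = complex_of_real \<eta>"
  have "cmod c = \<eta>" using \<open>0 < \<eta>\<close> by (simp add: c_def)
  then obtain u where u: "u - c *\<^sub>C V u = y" using id_minus_scaleC_V_surj \<open>\<eta> < 1\<close> by metis
  define d where "d k = cinner ((U ^^ Suc k) x) u" for k
  have d_Suc: "d k = cinner ((U ^^ Suc k) x) y + c * d (Suc k)" for k
  proof -
    have "d k = cinner ((U ^^ Suc k) x) (y + c *\<^sub>C V u)"
      using u by (simp add: d_def diff_eq_eq)
    then show ?thesis by (simp add: d_def c_def cinner_simps cinner_U_left[symmetric])
  qed
  \<comment> \<open>\<open>d 0 = 0\<close> and the vanishing of the earlier coefficients force \<open>d n = 0\<close>, so the
    \<open>n\<close>-th coefficient is \<open>-\<eta> d (Suc n)\<close>, of order \<open>\<eta>\<close>.\<close>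
  have "d 0 = 0" using orth[OF \<open>x \<in> L\<close> \<open>y \<in> L\<close>] u by (simp add: d_def c_def)
  moreover have "d 0 = c ^ j * d j" if "j \<le> n" for j
    using that
  proof (induction j)
    case (Suc j)
    then have "d j = c * d (Suc j)" using d_Suc[of j] earlier[of j] by simp
    then show ?case using Suc by simp
  qed simp
  ultimately have "d n = 0" using \<open>0 < \<eta>\<close> by (simp add: c_def)
  then have coeff: "cinner ((U ^^ Suc n) x) y = - c * d (Suc n)"
    using d_Suc[of n] by (simp add: add_eq_0_iff)
  have "(1 - \<eta>) * norm u \<le> norm y" using norm_id_minus_scaleC_V_ge[of c u] u \<open>cmod c = \<eta>\<close> by simp
  then have "norm u \<le> norm y / (1 - \<eta>)"
    using \<open>\<eta> < 1\<close> by (simp add: pos_le_divide_eq mult.commute)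
  then have "norm x * norm u \<le> norm x * norm y / (1 - \<eta>)"
    by (metis mult_left_mono norm_ge_zero times_divide_eq_right)
  moreover have "cmod (d (Suc n)) \<le> norm x * norm u"
    using cinner_cauchy_schwarz[of "(U ^^ Suc (Suc n)) x" u] by (simp add: d_def)
  ultimately have "cmod (d (Suc n)) \<le> norm x * norm y / (1 - \<eta>)" by linarith
  then show ?thesis
    unfolding coeff using \<open>cmod c = \<eta>\<close> \<open>0 < \<eta>\<close>
    by (simp add: norm_mult) (metis mult_left_mono less_imp_le times_divide_eq_right)
qed

lemma wandering_if_orthogonal_to_solutions:
  assumes "\<And>\<eta> x y u. 0 < \<eta> \<Longrightarrow> \<eta> < 1 \<Longrightarrow> x \<in> L \<Longrightarrow> y \<in> L \<Longrightarrow>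
      u - complex_of_real \<eta> *\<^sub>C V u = y \<Longrightarrow> cinner (U x) u = 0"
  shows "wandering U L"
proof -
  have "cinner ((U ^^ Suc n) x) y = 0" if xy: "x \<in> L" "y \<in> L" for x y n
  proof (induction n rule: less_induct)
    case (less n)
    have "cmod (cinner ((U ^^ Suc n) x) y) \<le> \<eta> * (norm x * norm y / (1 - \<eta>))"
      if "0 < \<eta>" "\<eta> < 1" for \<eta>
      using that xy less.IH by (intro wandering_coefficient_bound) (auto intro: assms)
    then have "cmod (cinner ((U ^^ Suc n) x) y) \<le> 0"
      by (rule nonpos_if_le_vanishing_multiples)
    then show ?case by simp
  qed
  then show ?thesis unfolding wandering_def by (metis Suc_le_D One_nat_def)
qed

lemma wandering_orthogonal_solutions:
  assumes "wandering U L" and "x \<in> L" and "y \<in> L" and "cmod \<zeta> < 1" and "cmod \<eta> < 1"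
    and v: "v - \<zeta> *\<^sub>C U v = U x" and u: "u - \<eta> *\<^sub>C V u = y"
  shows "cinner v u = 0"
proof -
  have v_orth: "cinner v ((V ^^ m) y) = 0" for m
  proof (rule bounded_geometric_recurrence_eq_0[where f = "\<lambda>m. cinner v ((V ^^ m) y)"])
    fix m
    have "cinner v ((V ^^ m) y) = cinner (U x + \<zeta> *\<^sub>C U v) ((V ^^ m) y)"
      using v by (simp add: diff_eq_eq)
    also have "\<dots> = cinner ((U ^^ Suc m) x) y + \<zeta> * cinner v ((V ^^ Suc m) y)"
      by (simp add: cinner_simps cinner_U_left cinner_funpow_U_left funpow_swap1)
    finally show "cinner v ((V ^^ m) y) = \<zeta> * cinner v ((V ^^ Suc m) y)"
      using assms(1-3) unfolding wandering_def by (metis add_0 le_add1 plus_1_eq_Suc)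
    show "cmod (cinner v ((V ^^ m) y)) \<le> norm v * norm y"
      using cinner_cauchy_schwarz[of v "(V ^^ m) y"] by simp
  qed (rule \<open>cmod \<zeta> < 1\<close>)
  have "cinner ((U ^^ k) v) u = 0" for k
  proof (rule bounded_geometric_recurrence_eq_0[where f = "\<lambda>k. cinner ((U ^^ k) v) u"])
    fix k
    have "cinner ((U ^^ k) v) u = cinner ((U ^^ k) v) (y + \<eta> *\<^sub>C V u)"
      using u by (simp add: diff_eq_eq)
    also have "\<dots> = cinner v ((V ^^ k) y) + cnj \<eta> * cinner ((U ^^ Suc k) v) u"
      by (simp add: cinner_simps cinner_U_left cinner_funpow_U_left funpow_swap1)
    finally show "cinner ((U ^^ k) v) u = cnj \<eta> * cinner ((U ^^ Suc k) v) u"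
      using v_orth by simp
    show "cmod (cinner ((U ^^ k) v) u) \<le> norm v * norm u"
      using cinner_cauchy_schwarz[of "(U ^^ k) v" u] by simp
  qed (use \<open>cmod \<eta> < 1\<close> in simp)
  from this[of 0] show ?thesis by simp
qed

lemma wandering_orthogonal_orbit:
  assumes "wandering U L" and "V x - x \<in> L" and "1 \<le> j"
  shows "cinner ((U ^^ j) (V x - x)) ((V ^^ n) x - x) = 0"
  using assms(3)
proof (induction n arbitrary: j)
  case (Suc n)
  have step: "(V ^^ Suc n) x - x = (V x - x) + V ((V ^^ n) x - x)" by (simp add: V_diff)
  have "cinner ((U ^^ j) (V x - x)) ((V ^^ Suc n) x - x)
      = cinner ((U ^^ j) (V x - x)) (V x - x) + cinner ((U ^^ Suc j) (V x - x)) ((V ^^ n) x - x)"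
    unfolding step by (simp add: cinner_add_right cinner_U_left)
  then show ?case using Suc.IH[of "Suc j"] Suc.prems assms(1,2) by (simp add: wandering_def)
qed simp

lemma norm_funpow_V_diff:
  assumes "wandering U L" and "V x - x \<in> L"
  shows "(norm ((V ^^ n) x - x))^2 = real n * (norm (V x - x))^2"
proof (induction n)
  case (Suc n)
  have step: "(V ^^ Suc n) x - x = (V x - x) + V ((V ^^ n) x - x)" by (simp add: V_diff)
  have "cinner (V x - x) (V ((V ^^ n) x - x)) = 0"
    using wandering_orthogonal_orbit[OF assms, of 1 n] by (simp add: cinner_U_left[symmetric])
  then have "(norm ((V ^^ Suc n) x - x))^2 = (norm (V x - x))^2 + (norm ((V ^^ n) x - x))^2"
    unfolding step by (simp add: norm_add_power2_orthogonal)
  then show ?case by (simp add: Suc.IH algebra_simps)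
qed simp

lemma fixed_if_displacement_in_wandering:
  assumes "wandering U L" and "V x - x \<in> L"
  shows "V x = x"
proof -
  have bound: "real n * (norm (V x - x))^2 \<le> (2 * norm x)^2" for n
  proof -
    have "norm ((V ^^ n) x - x) \<le> 2 * norm x"
      using norm_triangle_ineq4[of "(V ^^ n) x" x] by simp
    then have "(norm ((V ^^ n) x - x))^2 \<le> (2 * norm x)^2" by (rule power_mono) simp
    then show ?thesis by (simp add: norm_funpow_V_diff[OF assms])
  qed
  show ?thesis
  proof (rule ccontr)
    assume "V x \<noteq> x"
    then have "0 < (norm (V x - x))^2" by simp
    then obtain n where "(2 * norm x)^2 < real n * (norm (V x - x))^2"
      using reals_Archimedean3 by blast
    with bound[of n] show False by simp
  qed
qed

end

section \<open>Self-adjoint operators and their Cayley transforms\<close>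

locale selfadjoint =
  fixes D :: "'a::{complex_inner_space, complete_space} set" and A :: "'a \<Rightarrow> 'a"
  assumes selfadjoint: "selfadjoint_op D A"
begin

lemma csubspace_D: "csubspace D"
  using selfadjoint by (simp add: selfadjoint_op_def clinear_op_def)

lemma D_0: "0 \<in> D" and D_add: "u \<in> D \<Longrightarrow> v \<in> D \<Longrightarrow> u + v \<in> D"
  and D_scaleC: "u \<in> D \<Longrightarrow> c *\<^sub>C u \<in> D"
  using csubspace_D by (simp_all add: csubspace_def)

lemma D_diff: "u \<in> D \<Longrightarrow> v \<in> D \<Longrightarrow> u - v \<in> D"
  by (metis D_add D_scaleC scaleC_minus1_left diff_conv_add_uminus)

lemma A_add: "u \<in> D \<Longrightarrow> v \<in> D \<Longrightarrow> A (u + v) = A u + A v"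
  and A_scaleC: "u \<in> D \<Longrightarrow> A (c *\<^sub>C u) = c *\<^sub>C A u"
  using selfadjoint by (simp_all add: selfadjoint_op_def clinear_op_def)

lemma A_0: "A 0 = 0"
  using A_scaleC[OF D_0, of 0] by simp

lemma A_diff: "u \<in> D \<Longrightarrow> v \<in> D \<Longrightarrow> A (u - v) = A u - A v"
  by (metis A_add D_diff diff_add_cancel add_diff_cancel)

lemma adjoint_iff: "(\<forall>u\<in>D. cinner (A u) v = cinner u w) \<longleftrightarrow> v \<in> D \<and> w = A v"
  using selfadjoint by (simp add: selfadjoint_op_def)

lemma symmetric: "u \<in> D \<Longrightarrow> v \<in> D \<Longrightarrow> cinner (A u) v = cinner u (A v)"
  using adjoint_iff[of v "A v"] by blast

lemma graph_closed:
  assumes "\<And>n. X n \<in> D" and "X \<longlonglongrightarrow> u" and "(\<lambda>n. A (X n)) \<longlonglongrightarrow> w"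
  shows "u \<in> D \<and> A u = w"
proof -
  have "cinner (A x) u = cinner x w" if "x \<in> D" for x
  proof (rule LIMSEQ_unique)
    show "(\<lambda>n. cinner (A x) (X n)) \<longlonglongrightarrow> cinner (A x) u"
      by (rule tendsto_cinner_right[OF assms(2)])
    show "(\<lambda>n. cinner (A x) (X n)) \<longlonglongrightarrow> cinner x w"
      using tendsto_cinner_right[OF assms(3), of x] symmetric[OF that assms(1)] by simp
  qed
  then show ?thesis using adjoint_iff[of u w] by auto
qed

lemma norm_shift_power2:
  assumes "u \<in> D" and "Re c = 0"
  shows "(norm (A u - c *\<^sub>C u))^2 = (norm (A u))^2 + (cmod c * norm u)^2"
proof -
  have "cnj c + c = 0" using assms(2) by (simp add: complex_eq_iff)
  have "cinner u (A u) = cinner (A u) u" using symmetric[OF assms(1) assms(1)] by simp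
  then have "cinner (A u - c *\<^sub>C u) (A u - c *\<^sub>C u)
      = cinner (A u) (A u) - (cnj c + c) * cinner (A u) u + (c * cnj c) * cinner u u"
    by (simp add: cinner_simps algebra_simps)
  then have "cinner (A u - c *\<^sub>C u) (A u - c *\<^sub>C u) = cinner (A u) (A u) + (c * cnj c) * cinner u u"
    using \<open>cnj c + c = 0\<close> by simp
  then have "complex_of_real ((norm (A u - c *\<^sub>C u))^2) = complex_of_real ((norm (A u))^2 + (cmod c)^2 * (norm u)^2)"
    by (simp only: cinner_self_eq_power2_norm complex_norm_square[symmetric] of_real_add of_real_mult)
  then show ?thesis by (simp only: of_real_eq_iff power_mult_distrib)
qed

lemma norm_shift_lower_bounds:
  assumes "u \<in> D" and "Re c = 0"
  shows "norm (A u) \<le> norm (A u - c *\<^sub>C u)" and "cmod c * norm u \<le> norm (A u - c *\<^sub>C u)"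
  using norm_shift_power2[OF assms]
  by (simp_all add: power2_le_imp_le[of _ "norm (A u - c *\<^sub>C u)"])

lemma shift_eq_imp_eq:
  assumes "Re c = 0" and "c \<noteq> 0" and "u \<in> D" and "v \<in> D"
    and "A u - c *\<^sub>C u = A v - c *\<^sub>C v"
  shows "u = v"
proof -
  have "A (u - v) - c *\<^sub>C (u - v) = 0"
    using assms(3-5) by (simp add: A_diff scaleC_diff_right algebra_simps)
  then show ?thesis
    using norm_shift_lower_bounds(2)[OF D_diff[OF assms(3,4)] assms(1)] assms(2)
    by (simp add: mult_le_0_iff)
qed

lemma closed_shift_range:
  assumes "Re c = 0" and "c \<noteq> 0"
  shows "closed ((\<lambda>u. A u - c *\<^sub>C u) ` D)"
  unfolding closed_sequential_limits
proof (intro allI impI, elim conjE)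
  fix y l assume "\<forall>n. y n \<in> (\<lambda>u. A u - c *\<^sub>C u) ` D" and "y \<longlonglongrightarrow> l"
  then have "\<forall>n. \<exists>u. u \<in> D \<and> y n = A u - c *\<^sub>C u" by blast
  then obtain u where u: "\<And>n. u n \<in> D" and y_eq: "\<And>n. y n = A (u n) - c *\<^sub>C u n"
    by metis
  have y: "y = (\<lambda>n. A (u n) - c *\<^sub>C u n)" using y_eq by (rule ext)
  have y_diff: "y m - y n = A (u m - u n) - c *\<^sub>C (u m - u n)" for m n
    using u by (simp add: y A_diff scaleC_diff_right algebra_simps)
  have "Cauchy y" using \<open>y \<longlonglongrightarrow> l\<close> by (rule LIMSEQ_imp_Cauchy)
  have "norm (u m - u n) \<le> inverse (cmod c) * norm (y m - y n)" for m n
    using norm_shift_lower_bounds(2)[OF D_diff[OF u u] assms(1), of m n] assms(2)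
    by (simp add: y_diff field_simps)
  then have "Cauchy u"
    by (rule Cauchy_dominated[OF \<open>Cauchy y\<close>, rotated]) (use assms(2) in simp)
  then obtain a where "u \<longlonglongrightarrow> a" using Cauchy_convergent_iff convergent_def by blast
  have "norm (A (u m) - A (u n)) \<le> 1 * norm (y m - y n)" for m n
    using norm_shift_lower_bounds(1)[OF D_diff[OF u u] assms(1), of m n] u
    by (simp add: y_diff A_diff)
  then have "Cauchy (\<lambda>n. A (u n))"
    by (rule Cauchy_dominated[OF \<open>Cauchy y\<close>, rotated]) simp
  then obtain b where "(\<lambda>n. A (u n)) \<longlonglongrightarrow> b" using Cauchy_convergent_iff convergent_def by blast
  have "a \<in> D" and "A a = b"
    using graph_closed[OF u \<open>u \<longlonglongrightarrow> a\<close> \<open>(\<lambda>n. A (u n)) \<longlonglongrightarrow> b\<close>] by blast+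
  have "y \<longlonglongrightarrow> A a - c *\<^sub>C a"
    unfolding y \<open>A a = b\<close> by (intro tendsto_diff tendsto_scaleC) fact+
  then have "l = A a - c *\<^sub>C a" using \<open>y \<longlonglongrightarrow> l\<close> LIMSEQ_unique by blast
  then show "l \<in> (\<lambda>u. A u - c *\<^sub>C u) ` D" using \<open>a \<in> D\<close> by blast
qed

lemma csubspace_shift_range: "csubspace ((\<lambda>u. A u - c *\<^sub>C u) ` D)"
  unfolding csubspace_def
proof (intro conjI ballI allI)
  show "0 \<in> (\<lambda>u. A u - c *\<^sub>C u) ` D" using D_0 A_0 by force
next
  fix x y assume "x \<in> (\<lambda>u. A u - c *\<^sub>C u) ` D" "y \<in> (\<lambda>u. A u - c *\<^sub>C u) ` D"
  then obtain u v where "u \<in> D" "v \<in> D" "x = A u - c *\<^sub>C u" "y = A v - c *\<^sub>C v" by blast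
  then show "x + y \<in> (\<lambda>u. A u - c *\<^sub>C u) ` D"
    by (intro image_eqI[of _ _ "u + v"]) (simp_all add: D_add A_add scaleC_add_right)
next
  fix k x assume "x \<in> (\<lambda>u. A u - c *\<^sub>C u) ` D"
  then obtain u where "u \<in> D" "x = A u - c *\<^sub>C u" by blast
  then show "k *\<^sub>C x \<in> (\<lambda>u. A u - c *\<^sub>C u) ` D"
    by (intro image_eqI[of _ _ "k *\<^sub>C u"])
      (simp_all add: D_scaleC A_scaleC scaleC_diff_right scaleC_left_commute[of c k])
qed

lemma orthogonal_shift_range_eq_0:
  assumes "Re c = 0" and "c \<noteq> 0" and perp: "\<And>u. u \<in> D \<Longrightarrow> cinner (A u - c *\<^sub>C u) x = 0"
  shows "x = 0"
proof -
  have "\<forall>u\<in>D. cinner (A u) x = cinner u (cnj c *\<^sub>C x)"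
    using perp by (simp add: cinner_simps)
  then have "x \<in> D" and Ax: "A x = cnj c *\<^sub>C x" by (simp_all add: adjoint_iff)
  then have "cnj c * cinner x x = c * cinner x x"
    using symmetric[OF \<open>x \<in> D\<close> \<open>x \<in> D\<close>] by (simp add: cinner_simps)
  moreover have "cnj c \<noteq> c" using assms(1,2) by (simp add: complex_eq_iff)
  ultimately show ?thesis by simp
qed

lemma shift_surj:
  assumes "Re c = 0" and "c \<noteq> 0"
  obtains u where "u \<in> D" and "A u - c *\<^sub>C u = f"
proof -
  let ?R = "(\<lambda>u. A u - c *\<^sub>C u) ` D"
  have "closed_csubspace ?R"
    using closed_shift_range[OF assms] csubspace_shift_range by (simp add: closed_csubspace_def)
  then obtain p where "p \<in> ?R" and perp: "\<And>y. y \<in> ?R \<Longrightarrow> cinner (f - p) y = 0"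
    using exists_orthogonal_projection by blast
  have "cinner (A u - c *\<^sub>C u) (f - p) = 0" if "u \<in> D" for u
    using perp[of "A u - c *\<^sub>C u"] that cinner_commute[of "A u - c *\<^sub>C u" "f - p"] by auto
  then have "f = p" using orthogonal_shift_range_eq_0[OF assms] by fastforce
  then show ?thesis using \<open>p \<in> ?R\<close> that by blast
qed

definition resolvent :: "complex \<Rightarrow> 'a \<Rightarrow> 'a" where
  "resolvent c f = (THE u. u \<in> D \<and> A u - c *\<^sub>C u = f)"

lemma resolvent_solves:
  assumes "Re c = 0" and "c \<noteq> 0"
  shows "resolvent c f \<in> D \<and> A (resolvent c f) - c *\<^sub>C resolvent c f = f"
proof -
  obtain u where "u \<in> D" "A u - c *\<^sub>C u = f" using shift_surj[OF assms] .
  then have "\<exists>!u. u \<in> D \<and> A u - c *\<^sub>C u = f" using shift_eq_imp_eq[OF assms] by blast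
  then show ?thesis unfolding resolvent_def by (rule theI')
qed

lemma resolvent_shift:
  assumes "u \<in> D" and "Re c = 0" and "c \<noteq> 0"
  shows "resolvent c (A u - c *\<^sub>C u) = u"
  using resolvent_solves[OF assms(2,3)] shift_eq_imp_eq[OF assms(2,3) _ assms(1)] by blast

lemma shift_minus_i: "A u - (- \<i>) *\<^sub>C u = A u + \<i> *\<^sub>C u"
  by (simp add: scaleC_minus_left)

lemma exists_shift_i:
  obtains u where "u \<in> D" and "f = A u - \<i> *\<^sub>C u"
  using resolvent_solves[of \<i> f] by force

lemma exists_shift_minus_i:
  obtains u where "u \<in> D" and "f = A u + \<i> *\<^sub>C u"
  using resolvent_solves[of "- \<i>" f] by (force simp: shift_minus_i)

lemma cayley_shift: "u \<in> D \<Longrightarrow> cayley D A (A u - \<i> *\<^sub>C u) = A u + \<i> *\<^sub>C u"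
  by (simp add: cayley_def resolvent_shift flip: resolvent_def)

definition cayley_inverse :: "'a \<Rightarrow> 'a" where
  "cayley_inverse f = A (resolvent (- \<i>) f) - \<i> *\<^sub>C resolvent (- \<i>) f"

lemma cayley_inverse_shift: "u \<in> D \<Longrightarrow> cayley_inverse (A u + \<i> *\<^sub>C u) = A u - \<i> *\<^sub>C u"
  using resolvent_shift[of u "- \<i>"] by (simp add: cayley_inverse_def shift_minus_i)

lemma cinner_shift_plus_minus:
  assumes "u \<in> D" and "v \<in> D"
  shows "cinner (A u + \<i> *\<^sub>C u) (A v + \<i> *\<^sub>C v) = cinner (A u - \<i> *\<^sub>C u) (A v - \<i> *\<^sub>C v)"
  using symmetric[OF assms] by (simp add: cinner_simps algebra_simps)

lemma cayley_add: "cayley D A (x + y) = cayley D A x + cayley D A y"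
proof -
  obtain u where u: "u \<in> D" "x = A u - \<i> *\<^sub>C u" by (rule exists_shift_i)
  obtain v where v: "v \<in> D" "y = A v - \<i> *\<^sub>C v" by (rule exists_shift_i)
  have "x + y = A (u + v) - \<i> *\<^sub>C (u + v)"
    using u v by (simp add: A_add scaleC_add_right)
  then have "cayley D A (x + y) = A (u + v) + \<i> *\<^sub>C (u + v)"
    using cayley_shift[OF D_add[OF u(1) v(1)]] by simp
  then show ?thesis using u v by (simp add: cayley_shift A_add scaleC_add_right)
qed

lemma cayley_scaleC: "cayley D A (c *\<^sub>C x) = c *\<^sub>C cayley D A x"
proof -
  obtain u where u: "u \<in> D" "x = A u - \<i> *\<^sub>C u" by (rule exists_shift_i)
  have "c *\<^sub>C x = A (c *\<^sub>C u) - \<i> *\<^sub>C (c *\<^sub>C u)"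
    using u by (simp add: A_scaleC scaleC_diff_right scaleC_left_commute[of c])
  then have "cayley D A (c *\<^sub>C x) = A (c *\<^sub>C u) + \<i> *\<^sub>C (c *\<^sub>C u)"
    using cayley_shift[OF D_scaleC[OF u(1)]] by simp
  then show ?thesis
    using u by (simp add: cayley_shift A_scaleC scaleC_add_right scaleC_left_commute[of c])
qed

sublocale unitary_pair "cayley D A" cayley_inverse
proof
  fix x y :: 'a
  obtain u where u: "u \<in> D" "x = A u - \<i> *\<^sub>C u" by (rule exists_shift_i)
  obtain v where v: "v \<in> D" "y = A v - \<i> *\<^sub>C v" by (rule exists_shift_i)
  show "cayley_inverse (cayley D A x) = x" and "cinner (cayley D A x) (cayley D A y) = cinner x y"
    using u v by (simp_all add: cayley_shift cayley_inverse_shift cinner_shift_plus_minus)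
  obtain w where w: "w \<in> D" "x = A w + \<i> *\<^sub>C w" by (rule exists_shift_minus_i)
  then show "cayley D A (cayley_inverse x) = x"
    by (simp add: cayley_shift cayley_inverse_shift)
qed (simp_all add: cayley_add cayley_scaleC)

lemma cayley_fixed_eq_0:
  assumes "cayley D A x = x"
  shows "x = 0"
proof -
  obtain u where "u \<in> D" and x: "x = A u - \<i> *\<^sub>C u" using exists_shift_i .
  then have "A u + \<i> *\<^sub>C u = A u - \<i> *\<^sub>C u" using assms cayley_shift by simp
  then have "\<i> *\<^sub>C u + \<i> *\<^sub>C u = 0" by (simp add: algebra_simps)
  then have "(\<i> + \<i>) *\<^sub>C u = 0" by (simp only: scaleC_add_left)
  then have "u = 0" using scaleC_cancel[of "\<i> + \<i>" u 0] by simp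
  then show ?thesis using x A_0 by simp
qed

end

section \<open>The restricted operator \<open>S\<^sub>L\<close>\<close>

locale selfadjoint_restriction = selfadjoint D A
  for D :: "'a::{complex_inner_space, complete_space} set" and A +
  fixes L :: "'a set"
  assumes closed_csubspace_L: "closed_csubspace L"
begin

abbreviation U :: "'a \<Rightarrow> 'a" where "U \<equiv> cayley D A"
abbreviation V :: "'a \<Rightarrow> 'a" where "V \<equiv> cayley_inverse"
abbreviation DL :: "'a set" where "DL \<equiv> SL_dom D A L"

lemma L_0: "0 \<in> L" and L_scaleC: "x \<in> L \<Longrightarrow> c *\<^sub>C x \<in> L"
  using closed_csubspace_L by (simp_all add: closed_csubspace_def csubspace_def)

lemma L_scaleC_iff: "c \<noteq> 0 \<Longrightarrow> c *\<^sub>C x \<in> L \<longleftrightarrow> x \<in> L"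
  using L_scaleC[of "c *\<^sub>C x" "inverse c"] L_scaleC by (auto simp: scaleC_scaleC scaleC_one)

lemma cinner_shift_defect:
  assumes "u \<in> D"
  shows "cinner (A u - \<i> *\<^sub>C u) ((z - \<i>) *\<^sub>C v - (z + \<i>) *\<^sub>C V v)
       = 2 * \<i> * (cinner (A u) v - cinner u (z *\<^sub>C v))"
proof -
  have "cinner (A u - \<i> *\<^sub>C u) (V v) = cinner (A u + \<i> *\<^sub>C u) v"
    by (simp add: cinner_U_left[symmetric] cayley_shift[OF assms])
  then show ?thesis by (simp add: cinner_simps algebra_simps)
qed

lemma defect_space_iff: "v \<in> defect_space DL A z \<longleftrightarrow> (z - \<i>) *\<^sub>C v - (z + \<i>) *\<^sub>C V v \<in> L"
proof
  assume v: "v \<in> defect_space DL A z"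
  show "(z - \<i>) *\<^sub>C v - (z + \<i>) *\<^sub>C V v \<in> L"
  proof (rule closed_csubspace_orthogonal_orthogonal[OF closed_csubspace_L])
    fix f assume "\<forall>g\<in>L. cinner f g = 0"
    moreover obtain u where "u \<in> D" and f: "f = A u - \<i> *\<^sub>C u" by (rule exists_shift_i)
    ultimately have "u \<in> DL" by (simp add: SL_dom_def)
    then show "cinner f ((z - \<i>) *\<^sub>C v - (z + \<i>) *\<^sub>C V v) = 0"
      using v \<open>u \<in> D\<close> by (simp add: f cinner_shift_defect defect_space_def)
  qed
next
  assume in_L: "(z - \<i>) *\<^sub>C v - (z + \<i>) *\<^sub>C V v \<in> L"
  show "v \<in> defect_space DL A z"
    unfolding defect_space_def
  proof (intro CollectI ballI)
    fix u assume "u \<in> DL"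
    then have "u \<in> D" and "cinner (A u - \<i> *\<^sub>C u) ((z - \<i>) *\<^sub>C v - (z + \<i>) *\<^sub>C V v) = 0"
      using in_L by (simp_all add: SL_dom_def)
    then show "cinner (A u) v = cinner u (z *\<^sub>C v)" using cinner_shift_defect[of u z v] by simp
  qed
qed

lemma defect_space_i: "v \<in> defect_space DL A \<i> \<longleftrightarrow> V v \<in> L"
proof -
  have scaled: "(\<i> - \<i>) *\<^sub>C v - (\<i> + \<i>) *\<^sub>C V v = (- 2 * \<i>) *\<^sub>C V v"
    by (simp add: scaleC_minus_left)
  show ?thesis unfolding defect_space_iff scaled by (rule L_scaleC_iff) simp
qed

lemma defect_space_minus_i: "defect_space DL A (- \<i>) = L"
proof -
  have scaled: "(- \<i> - \<i>) *\<^sub>C v - (- \<i> + \<i>) *\<^sub>C V v = (- 2 * \<i>) *\<^sub>C v" for v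
    by simp
  have "v \<in> defect_space DL A (- \<i>) \<longleftrightarrow> v \<in> L" for v
    unfolding defect_space_iff scaled by (rule L_scaleC_iff) simp
  then show ?thesis by blast
qed

lemma defect_space_lower_iff:
  assumes "Im w < 0"
  shows "u \<in> defect_space DL A w \<longleftrightarrow> u - ((w + \<i>) / (w - \<i>)) *\<^sub>C V u \<in> L"
proof -
  define \<eta> where "\<eta> = (w + \<i>) / (w - \<i>)"
  have "w - \<i> \<noteq> 0" using assms by (auto simp: complex_eq_iff)
  then have "(w - \<i>) * \<eta> = w + \<i>" by (simp add: \<eta>_def)
  then have scaled: "(w - \<i>) *\<^sub>C u - (w + \<i>) *\<^sub>C V u = (w - \<i>) *\<^sub>C (u - \<eta> *\<^sub>C V u)"
    by (simp add: scaleC_diff_right scaleC_scaleC)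
  show ?thesis
    unfolding \<eta>_def[symmetric] defect_space_iff scaled by (rule L_scaleC_iff) fact
qed

lemma defect_space_upper_iff:
  assumes "Im z > 0"
  shows "v \<in> defect_space DL A z \<longleftrightarrow> V (v - ((z - \<i>) / (z + \<i>)) *\<^sub>C U v) \<in> L"
proof -
  define \<zeta> where "\<zeta> = (z - \<i>) / (z + \<i>)"
  have "z + \<i> \<noteq> 0" using assms by (auto simp: complex_eq_iff)
  then have "(z + \<i>) * \<zeta> = z - \<i>" by (simp add: \<zeta>_def)
  then have "(z - \<i>) *\<^sub>C v - (z + \<i>) *\<^sub>C V v = (z + \<i>) *\<^sub>C (\<zeta> *\<^sub>C v - V v)"
    by (simp add: scaleC_diff_right scaleC_scaleC)
  also have "\<zeta> *\<^sub>C v - V v = (-1) *\<^sub>C V (v - \<zeta> *\<^sub>C U v)"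
    by (simp add: V_diff V_scaleC scaleC_minus1_left)
  finally have scaled: "(z - \<i>) *\<^sub>C v - (z + \<i>) *\<^sub>C V v = (z + \<i>) *\<^sub>C (-1) *\<^sub>C V (v - \<zeta> *\<^sub>C U v)" .
  show ?thesis
    unfolding \<zeta>_def[symmetric] defect_space_iff scaled
    using L_scaleC_iff[OF \<open>z + \<i> \<noteq> 0\<close>] L_scaleC_iff[of "-1"] by simp
qed

lemma SL_dom_subset: "DL \<subseteq> D"
  by (auto simp: SL_dom_def)

lemma csubspace_SL_dom: "csubspace DL"
  unfolding csubspace_def
proof (intro conjI ballI allI)
  show "0 \<in> DL" by (simp add: SL_dom_def D_0 A_0)
  fix x y assume "x \<in> DL" "y \<in> DL"
  moreover have "A (x + y) - \<i> *\<^sub>C (x + y) = (A x - \<i> *\<^sub>C x) + (A y - \<i> *\<^sub>C y)"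
    if "x \<in> D" "y \<in> D"
    using that by (simp add: A_add scaleC_add_right)
  ultimately show "x + y \<in> DL"
    by (simp add: SL_dom_def D_add cinner_add_left)
next
  fix c x assume "x \<in> DL"
  moreover have "A (c *\<^sub>C x) - \<i> *\<^sub>C c *\<^sub>C x = c *\<^sub>C (A x - \<i> *\<^sub>C x)" if "x \<in> D"
    using that by (simp add: A_scaleC scaleC_diff_right scaleC_left_commute[of c])
  ultimately show "c *\<^sub>C x \<in> DL"
    by (simp add: SL_dom_def D_scaleC cinner_scaleC_left)
qed

lemma clinear_op_SL: "clinear_op DL A"
  using csubspace_SL_dom SL_dom_subset A_add A_scaleC unfolding clinear_op_def by blast

lemma symmetric_SL: "\<forall>u\<in>DL. \<forall>v\<in>DL. cinner (A u) v = cinner u (A v)"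
  using symmetric SL_dom_subset by blast

lemma closed_op_SL: "closed_op DL A"
  unfolding closed_op_def closed_sequential_limits
proof (intro allI impI, elim conjE)
  fix p l assume "\<forall>n. p n \<in> {(u, A u) |u. u \<in> DL}" and "p \<longlonglongrightarrow> l"
  then have "\<forall>n. \<exists>u. u \<in> DL \<and> p n = (u, A u)" by blast
  then obtain X where X: "\<And>n. X n \<in> DL" and p: "\<And>n. p n = (X n, A (X n))" by metis
  have "X \<longlonglongrightarrow> fst l" and "(\<lambda>n. A (X n)) \<longlonglongrightarrow> snd l"
    using tendsto_fst[OF \<open>p \<longlonglongrightarrow> l\<close>] tendsto_snd[OF \<open>p \<longlonglongrightarrow> l\<close>] by (simp_all add: p)
  moreover have "X n \<in> D" for n using X SL_dom_subset by blast
  ultimately have "fst l \<in> D" and A_l: "A (fst l) = snd l" using graph_closed by blast+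
  have "cinner (A (fst l) - \<i> *\<^sub>C fst l) \<gamma> = 0" if "\<gamma> \<in> L" for \<gamma>
  proof (rule LIMSEQ_unique)
    show "(\<lambda>n. cinner (A (X n) - \<i> *\<^sub>C X n) \<gamma>) \<longlonglongrightarrow> cinner (A (fst l) - \<i> *\<^sub>C fst l) \<gamma>"
      unfolding A_l by (intro tendsto_cinner_left tendsto_diff tendsto_scaleC) fact+
    show "(\<lambda>n. cinner (A (X n) - \<i> *\<^sub>C X n) \<gamma>) \<longlonglongrightarrow> 0"
      using X that by (simp add: SL_dom_def)
  qed
  then have "fst l \<in> DL" using \<open>fst l \<in> D\<close> by (simp add: SL_dom_def)
  then show "l \<in> {(u, A u) |u. u \<in> DL}" using A_l by (intro CollectI exI[of _ "fst l"]) auto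
qed

lemma wandering_if_defect_spaces_orthogonal:
  assumes orth: "\<And>z w x y. Im z > 0 \<Longrightarrow> Im w < 0 \<Longrightarrow> x \<in> defect_space DL A z \<Longrightarrow>
      y \<in> defect_space DL A w \<Longrightarrow> cinner x y = 0"
  shows "wandering U L"
proof (rule wandering_if_orthogonal_to_solutions)
  fix \<eta> x y u assume "0 < \<eta>" "\<eta> < 1" "x \<in> L" "y \<in> L" and u: "u - complex_of_real \<eta> *\<^sub>C V u = y"
  obtain w where "Im w < 0" and "(w + \<i>) / (w - \<i>) = complex_of_real \<eta>"
    using exists_lower_half_plane_cayley_parameter[of \<eta>] \<open>0 < \<eta>\<close> \<open>\<eta> < 1\<close> by auto
  then have "u \<in> defect_space DL A w" using u \<open>y \<in> L\<close> by (simp add: defect_space_lower_iff)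
  moreover have "U x \<in> defect_space DL A \<i>" using \<open>x \<in> L\<close> by (simp add: defect_space_i)
  ultimately show "cinner (U x) u = 0" using orth[of \<i> w] \<open>Im w < 0\<close> by simp
qed

lemma defect_spaces_orthogonal_if_wandering:
  assumes "wandering U L" and "Im z > 0" and "Im w < 0"
    and "v \<in> defect_space DL A z" and "u \<in> defect_space DL A w"
  shows "cinner v u = 0"
proof -
  define \<zeta> where "\<zeta> = (z - \<i>) / (z + \<i>)"
  define \<eta> where "\<eta> = (w + \<i>) / (w - \<i>)"
  have "V (v - \<zeta> *\<^sub>C U v) \<in> L" and "u - \<eta> *\<^sub>C V u \<in> L"
    using assms(2-5) by (simp_all add: \<zeta>_def \<eta>_def defect_space_upper_iff defect_space_lower_iff)
  moreover have "cmod \<zeta> < 1" and "cmod \<eta> < 1"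
    using assms(2,3) by (simp_all add: \<zeta>_def \<eta>_def cmod_cayley_upper cmod_cayley_lower)
  ultimately show ?thesis
    by (intro wandering_orthogonal_solutions[OF assms(1), where x = "V (v - \<zeta> *\<^sub>C U v)"
          and y = "u - \<eta> *\<^sub>C V u" and \<zeta> = \<zeta> and \<eta> = \<eta>]) simp_all
qed

lemma displacement_in_L_if_orthogonal_SL_dom:
  assumes "\<And>u. u \<in> DL \<Longrightarrow> cinner u x = 0"
  shows "V x - x \<in> L"
proof (rule closed_csubspace_orthogonal_orthogonal[OF closed_csubspace_L])
  fix f assume "\<forall>g\<in>L. cinner f g = 0"
  moreover obtain u where "u \<in> D" and f: "f = A u - \<i> *\<^sub>C u" by (rule exists_shift_i)
  ultimately have "u \<in> DL" by (simp add: SL_dom_def)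
  have "U f - f = \<i> *\<^sub>C u + \<i> *\<^sub>C u" using \<open>u \<in> D\<close> by (simp add: f cayley_shift algebra_simps)
  then have "cinner (U f - f) x = 0" using assms[OF \<open>u \<in> DL\<close>] by (simp add: cinner_simps)
  then show "cinner f (V x - x) = 0" by (simp add: cinner_simps cinner_U_left)
qed

lemma densely_defined_SL_dom:
  assumes "wandering U L"
  shows "densely_defined DL"
proof -
  have "closed_csubspace (closure DL)" by (rule closed_csubspace_closure[OF csubspace_SL_dom])
  have "h \<in> closure DL" for h
  proof -
    obtain p where "p \<in> closure DL" and perp: "\<And>y. y \<in> closure DL \<Longrightarrow> cinner (h - p) y = 0"
      using exists_orthogonal_projection[OF \<open>closed_csubspace (closure DL)\<close>] by blast
    have "cinner u (h - p) = 0" if "u \<in> DL" for u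
      using perp[of u] that closure_subset cinner_commute[of u "h - p"] by auto
    then have "V (h - p) = h - p"
      using fixed_if_displacement_in_wandering[OF assms displacement_in_L_if_orthogonal_SL_dom] by blast
    then have "U (h - p) = h - p" by (metis U_V)
    then show ?thesis using cayley_fixed_eq_0 \<open>p \<in> closure DL\<close> by fastforce
  qed
  then show ?thesis by (auto simp: densely_defined_def)
qed

lemma defect_space_i_eq: "defect_space DL A \<i> = U ` L"
proof (rule set_eqI)
  fix v
  have "v \<in> U ` L \<longleftrightarrow> V v \<in> L" by (metis U_V V_U image_iff)
  then show "v \<in> defect_space DL A \<i> \<longleftrightarrow> v \<in> U ` L" by (simp add: defect_space_i)
qed

lemma defect_space_i_nonzero:
  assumes "L \<noteq> {0}"
  shows "defect_space DL A \<i> \<noteq> {0}"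
proof -
  obtain g where "g \<in> L" "g \<noteq> 0" using assms L_0 by blast
  moreover have "U g \<noteq> 0" using \<open>g \<noteq> 0\<close> by (metis V_U V_0)
  ultimately show ?thesis by (auto simp: defect_space_i_eq)
qed

lemma defect_spaces_eqpoll_onb:
  "\<exists>B1 B2. is_onb B1 (defect_space DL A \<i>) \<and> is_onb B2 (defect_space DL A (- \<i>)) \<and> B1 \<approx> B2"
proof -
  obtain B where "is_onb B L" using is_onb_exists[OF closed_csubspace_L] by blast
  then have "is_onb (U ` B) (U ` L)" by (rule is_onb_image[OF closed_csubspace_L])
  moreover have "U ` B \<approx> B" by (rule inj_on_image_eqpoll_self) (metis V_U inj_onI)
  ultimately show ?thesis
    using \<open>is_onb B L\<close> by (auto simp: defect_space_i_eq defect_space_minus_i)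
qed

lemma phillips_symmetric_iff_wandering:
  assumes "L \<noteq> {0}"
  shows "phillips_symmetric DL A \<longleftrightarrow> wandering U L"
proof
  assume "phillips_symmetric DL A"
  then show "wandering U L"
    unfolding phillips_symmetric_def by (intro wandering_if_defect_spaces_orthogonal) blast
next
  assume "wandering U L"
  then show "phillips_symmetric DL A"
    unfolding phillips_symmetric_def symmetric_op_def
    using clinear_op_SL densely_defined_SL_dom symmetric_SL closed_op_SL defect_space_i_nonzero[OF assms]
      defect_spaces_eqpoll_onb defect_spaces_orthogonal_if_wandering by blast
qed

end

theorem theorem5p2:
  fixes D :: "'a::{complex_inner_space, complete_space} set"
    and A :: "'a \<Rightarrow> 'a"
    and L :: "'a set"
  assumes "separable_type TYPE('a)"
    and "selfadjoint_op D A"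
    and "closed_csubspace L"
    and "L \<noteq> {0}"
  shows "phillips_symmetric (SL_dom D A L) A \<longleftrightarrow> wandering (cayley D A) L"
proof -
  interpret selfadjoint_restriction D A L using assms(2,3) by unfold_locales
  show ?thesis using phillips_symmetric_iff_wandering[OF assms(4)] .
qed

end
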